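(* Let $T>0$, let $\pi:[0,T]\to\mathbb R$ be continuous and piecewise $C^1$ with $\pi(0)=0$, and let $\eta(t)=(t,\pi(t))$. Then there exists $n\in\mathbb N$ such that $\mathcal P_{\alpha_n}\cdots\mathcal P_{\alpha_1}\mathcal P_{\alpha_0}\eta(t)\in\bar C_{\mathrm{aff}}$ for all $t\in[0,T]$.
   Context: $\alpha_0=(0,-2)$, $\alpha_1=(0,2)$, $\tilde\alpha_0(t,x)=t-x$, $\tilde\alpha_1(t,x)=x$; for $k\in\mathbb N$ indices are taken modulo 2. For continuous $\eta:[0,T]\to\mathbb R^2$ with $\eta(0)=0$, $\mathcal P_{\alpha_i}\eta(t)=\eta(t)-\inf_{0\le s\le t}\tilde\alpha_i(\eta(s))\alpha_i$. $\bar C_{\mathrm{aff}}=\{(t,x)\in\mathbb R^2:0\le x\le t\}$. *)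

theory Defs
  imports "HOL-Analysis.Analysis"
begin

definition alpha :: "nat \<Rightarrow> real \<times> real" where
  "alpha k = (if even k then (0, -2) else (0, 2))"

definition alpha_tilde :: "nat \<Rightarrow> real \<times> real \<Rightarrow> real" where
  "alpha_tilde k p = (if even k then fst p - snd p else snd p)"

definition P_op :: "nat \<Rightarrow> (real \<Rightarrow> real \<times> real) \<Rightarrow> (real \<Rightarrow> real \<times> real)" where
  "P_op k \<eta> = (\<lambda>t. \<eta> t - (INF s\<in>{0..t}. alpha_tilde k (\<eta> s)) *\<^sub>R alpha k)"

text \<open>P_iter n eta = P_{alpha_n} ... P_{alpha_1} P_{alpha_0} eta.\<close>
fun P_iter :: "nat \<Rightarrow> (real \<Rightarrow> real \<times> real) \<Rightarrow> (real \<Rightarrow> real \<times> real)" where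
  "P_iter 0 \<eta> = P_op 0 \<eta>"
| "P_iter (Suc n) \<eta> = P_op (Suc n) (P_iter n \<eta>)"

definition C_aff :: "(real \<times> real) set" where
  "C_aff = {(t, x). 0 \<le> x \<and> x \<le> t}"

definition piecewise_C1_on :: "real \<Rightarrow> real \<Rightarrow> (real \<Rightarrow> real) \<Rightarrow> bool" where
  "piecewise_C1_on a b f \<longleftrightarrow>
     (\<exists>ts :: real list. length ts \<ge> 2 \<and> sorted_wrt (<) ts \<and> hd ts = a \<and> last ts = b \<and>
        (\<forall>i. Suc i < length ts \<longrightarrow>
           (\<exists>f'. continuous_on {ts ! i .. ts ! Suc i} f' \<and>
                 (\<forall>x\<in>{ts ! i .. ts ! Suc i}.
                    (f has_real_derivative f' x) (at x within {ts ! i .. ts ! Suc i})))))"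

end

theory Submission
  imports Defs
begin

text \<open>Writing the path as \<open>(t, x t)\<close>, every \<open>P_op\<close> acts on the second coordinate only:
  odd steps are the reflection \<open>x - 2 inf x\<close> off the wall \<open>x = 0\<close>, even steps the same
  reflection conjugated by the flip \<open>x \<mapsto> t - x\<close>, which exchanges the two walls of the cone.
  Both preserve the slope window \<open>[-A, 1 + A]\<close>, which contains the slopes of a Lipschitz \<open>\<pi>\<close>.

  Near \<open>0\<close> the path is almost linear with slope \<open>a = \<pi>'(0+)\<close>. A reflection off the wall
  that the path is leaving turns \<open>a\<close> into \<open>-a\<close> (resp. \<open>2 - a\<close>), moving it towards \<open>[1/4, 3/4]\<close>
  by a definite amount, so after finitely many steps the path lies in the cone on some
  \<open>[0, \<delta>]\<close>. On an initial interval inside the cone all further steps act trivially, while the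
  next step pushes the interval out from \<open>[0, \<tau>]\<close> to \<open>[0, (1 + 1/(3A)) \<tau>]\<close>: beyond \<open>\<tau>\<close> the
  path leaves the wall with slope at most \<open>A\<close>. Iterating covers \<open>[0, T]\<close>.\<close>

section \<open>Reflections acting on graphs\<close>

definition slopes_in :: "real \<Rightarrow> real \<Rightarrow> real \<Rightarrow> (real \<Rightarrow> real) \<Rightarrow> bool" where
  "slopes_in D p q x \<longleftrightarrow> (\<forall>s t. 0 \<le> s \<longrightarrow> s \<le> t \<longrightarrow> t \<le> D \<longrightarrow>
      p * (t - s) \<le> x t - x s \<and> x t - x s \<le> q * (t - s))"

definition in_cone_on :: "real \<Rightarrow> (real \<Rightarrow> real) \<Rightarrow> bool" where
  "in_cone_on \<tau> x \<longleftrightarrow> (\<forall>t\<in>{0..\<tau>}. (t, x t) \<in> C_aff)"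

definition pitman :: "(real \<Rightarrow> real) \<Rightarrow> real \<Rightarrow> real" where
  "pitman x t = x t - 2 * (INF s\<in>{0..t}. x s)"

definition flip :: "(real \<Rightarrow> real) \<Rightarrow> real \<Rightarrow> real" where
  "flip x t = t - x t"

definition pitman_step :: "nat \<Rightarrow> (real \<Rightarrow> real) \<Rightarrow> real \<Rightarrow> real" where
  "pitman_step k x = (if even k then flip (pitman (flip x)) else pitman x)"

fun pitman_iter :: "nat \<Rightarrow> nat \<Rightarrow> (real \<Rightarrow> real) \<Rightarrow> real \<Rightarrow> real" where
  "pitman_iter k 0 x = x"
| "pitman_iter k (Suc j) x = pitman_iter (Suc k) j (pitman_step k x)"

lemma P_op_graph: "P_op k (\<lambda>t. (t, x t)) = (\<lambda>t. (t, pitman_step k x t))"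
  by (simp add: fun_eq_iff P_op_def alpha_def alpha_tilde_def pitman_step_def pitman_def flip_def)

lemma pitman_iter_Suc_right: "pitman_iter k (Suc j) x = pitman_step (k + j) (pitman_iter k j x)"
  by (induction j arbitrary: k x) auto

lemma P_iter_graph: "P_iter n (\<lambda>t. (t, x t)) = (\<lambda>t. (t, pitman_iter 0 (Suc n) x t))"
  by (induction n) (simp_all add: P_op_graph pitman_iter_Suc_right del: pitman_iter.simps(2))

lemma flip_flip [simp]: "flip (flip x) = x"
  by (simp add: flip_def fun_eq_iff)

lemma flip_pitman_step: "flip (pitman_step k x) = pitman_step (Suc k) (flip x)"
  by (simp add: pitman_step_def)

lemma flip_pitman_iter: "flip (pitman_iter k j x) = pitman_iter (Suc k) j (flip x)"
  by (induction j arbitrary: k x) (simp_all add: flip_pitman_step)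

lemma in_cone_on_iff: "in_cone_on \<tau> x \<longleftrightarrow> (\<forall>t. 0 \<le> t \<longrightarrow> t \<le> \<tau> \<longrightarrow> 0 \<le> x t \<and> x t \<le> t)"
  by (auto simp: in_cone_on_def C_aff_def)

lemma in_cone_on_flip [simp]: "in_cone_on \<tau> (flip x) \<longleftrightarrow> in_cone_on \<tau> x"
  by (auto simp: in_cone_on_iff flip_def)

lemma in_cone_on_mono: "in_cone_on \<tau> x \<Longrightarrow> \<tau>' \<le> \<tau> \<Longrightarrow> in_cone_on \<tau>' x"
  by (auto simp: in_cone_on_iff)

lemma slopes_inD:
  "slopes_in D p q x \<Longrightarrow> 0 \<le> s \<Longrightarrow> s \<le> t \<Longrightarrow> t \<le> D \<Longrightarrow>
    p * (t - s) \<le> x t - x s \<and> x t - x s \<le> q * (t - s)"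
  unfolding slopes_in_def by blast

lemma slopes_in_flip_iff: "slopes_in D p q (flip x) \<longleftrightarrow> slopes_in D (1 - q) (1 - p) x"
  unfolding slopes_in_def flip_def by (auto simp: algebra_simps)

lemma slopes_in_mono:
  assumes "slopes_in D p q x" "p' \<le> p" "q \<le> q'"
  shows "slopes_in D p' q' x"
  unfolding slopes_in_def
proof (intro allI impI)
  fix s t :: real assume st: "0 \<le> s" "s \<le> t" "t \<le> D"
  have "p' * (t - s) \<le> p * (t - s)" "q * (t - s) \<le> q' * (t - s)"
    using assms(2,3) st by (auto intro: mult_right_mono)
  with slopes_inD[OF assms(1) st]
  show "p' * (t - s) \<le> x t - x s \<and> x t - x s \<le> q' * (t - s)" by linarith
qed

lemma slopes_in_cong:
  assumes "slopes_in D p q x" "\<And>t. 0 \<le> t \<Longrightarrow> t \<le> D \<Longrightarrow> y t = x t"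
  shows "slopes_in D p q y"
  unfolding slopes_in_def
proof (intro allI impI)
  fix s t :: real assume st: "0 \<le> s" "s \<le> t" "t \<le> D"
  then show "p * (t - s) \<le> y t - y s \<and> y t - y s \<le> q * (t - s)"
    using slopes_inD[OF assms(1) st] assms(2) by simp
qed

lemma lipschitz_imp_slopes_in:
  assumes "e-lipschitz_on {0..D} (\<lambda>t. x t - c * t)"
  shows "slopes_in D (c - e) (c + e) x"
  unfolding slopes_in_def
proof (intro allI impI)
  fix s t :: real assume st: "0 \<le> s" "s \<le> t" "t \<le> D"
  have "\<bar>(x t - c * t) - (x s - c * s)\<bar> \<le> e * (t - s)"
    using lipschitz_onD[OF assms, of t s] st by (simp add: dist_real_def)
  then have "- (e * (t - s)) \<le> (x t - x s) - c * (t - s)" "(x t - x s) - c * (t - s) \<le> e * (t - s)"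
    by (simp_all add: abs_le_iff algebra_simps)
  then show "(c - e) * (t - s) \<le> x t - x s \<and> x t - x s \<le> (c + e) * (t - s)"
    by (simp add: algebra_simps)
qed

lemma slopes_in_bdd_below:
  assumes "slopes_in D p q x" "0 \<le> t" "t \<le> D"
  shows "bdd_below (x ` {0..t})"
proof (rule bdd_belowI2)
  fix u assume u: "u \<in> {0..t}"
  then have "p * u \<le> x u - x 0"
    using slopes_inD[OF assms(1), of 0 u] assms by auto
  moreover have "- (\<bar>p\<bar> * u) \<le> p * u"
    using u abs_ge_minus_self[of "p * u"] by (simp add: abs_mult)
  moreover have "\<bar>p\<bar> * u \<le> \<bar>p\<bar> * t"
    using u by (intro mult_left_mono) auto
  ultimately show "x 0 - \<bar>p\<bar> * t \<le> x u" by linarith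
qed

section \<open>The Pitman reflection\<close>

lemma pitman_step_zero: "x 0 = 0 \<Longrightarrow> pitman_step k x 0 = 0"
  by (simp add: pitman_step_def pitman_def flip_def)

lemma pitman_iter_zero: "x 0 = 0 \<Longrightarrow> pitman_iter k j x 0 = 0"
  by (induction j arbitrary: k x) (simp_all add: pitman_step_zero)

lemma pitman_nonneg:
  assumes "bdd_below (x ` {0..t})" "x 0 = 0" "0 \<le> t"
  shows "0 \<le> pitman x t"
proof -
  have "(INF s\<in>{0..t}. x s) \<le> x t"
    by (rule cINF_lower) (use assms in auto)
  moreover have "(INF s\<in>{0..t}. x s) \<le> x 0"
    by (rule cINF_lower) (use assms in auto)
  ultimately show ?thesis using assms(2) unfolding pitman_def by linarith
qed

lemma pitman_eq_self:
  assumes "x 0 = 0" "0 \<le> t" "\<And>s. 0 \<le> s \<Longrightarrow> s \<le> t \<Longrightarrow> 0 \<le> x s"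
  shows "pitman x t = x t"
proof -
  have "bdd_below (x ` {0..t})"
    by (rule bdd_belowI2[where m=0]) (use assms in auto)
  then have "(INF s\<in>{0..t}. x s) \<le> x 0"
    by (rule cINF_lower) (use assms in auto)
  moreover have "0 \<le> (INF s\<in>{0..t}. x s)"
    using assms by (auto intro: cINF_greatest)
  ultimately show ?thesis using assms(1) unfolding pitman_def by linarith
qed

lemma pitman_eq_uminus:
  assumes "0 \<le> t" "\<And>s. 0 \<le> s \<Longrightarrow> s \<le> t \<Longrightarrow> x t \<le> x s"
  shows "pitman x t = - x t"
proof -
  have "bdd_below (x ` {0..t})"
    by (rule bdd_belowI2[where m="x t"]) (use assms in auto)
  then have "(INF s\<in>{0..t}. x s) \<le> x t"
    by (rule cINF_lower) (use assms in auto)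
  moreover have "x t \<le> (INF s\<in>{0..t}. x s)"
    using assms by (auto intro: cINF_greatest)
  ultimately show ?thesis unfolding pitman_def by linarith
qed

lemma slopes_in_pitman:
  assumes sl: "slopes_in D p q x" and pq: "0 \<le> p + q"
  shows "slopes_in D p q (pitman x)"
  unfolding slopes_in_def
proof (intro allI impI)
  fix s t :: real assume st: "0 \<le> s" "s \<le> t" "t \<le> D"
  define M where "M r = (INF u\<in>{0..r}. x u)" for r
  have bdd: "bdd_below (x ` {0..t})"
    using slopes_in_bdd_below[OF sl] st by auto
  have M_le: "M r \<le> x u" if "0 \<le> u" "u \<le> r" "r \<le> t" for r u
    unfolding M_def using that by (intro cINF_lower bdd_below_mono[OF bdd]) auto
  have M_anti: "M t \<le> M s"
    unfolding M_def[of s] using st by (intro cINF_greatest M_le) auto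
  have xts: "p * (t - s) \<le> x t - x s" "x t - x s \<le> q * (t - s)"
    using slopes_inD[OF sl st] by auto
  \<comment> \<open>the running minimum drops by at most half the slack \<open>q (t - s) - (x t - x s)\<close>;
     this is where \<open>p + q \<ge> 0\<close> enters\<close>
  have "x t - x s + 2 * M s - q * (t - s) \<le> 2 * x u" if u: "0 \<le> u" "u \<le> t" for u
  proof (cases "u \<le> s")
    case True
    then show ?thesis using M_le[of u s] u st xts(2) by auto
  next
    case False
    have "x t - x u \<le> q * (t - u)" "p * (u - s) \<le> x u - x s"
      using slopes_inD[OF sl, of u t] slopes_inD[OF sl, of s u] u st False by auto
    moreover have "0 \<le> p * (u - s) + q * (u - s)"
      using pq False by (simp add: distrib_right[symmetric])
    moreover have "q * (t - s) = q * (t - u) + q * (u - s)"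
      by (simp add: algebra_simps)
    moreover have "M s \<le> x s" using M_le[of s s] st by auto
    ultimately show ?thesis by linarith
  qed
  then have "(x t - x s + 2 * M s - q * (t - s)) / 2 \<le> M t"
    unfolding M_def[of t] using st by (intro cINF_greatest) (auto simp: field_simps)
  moreover have "pitman x r = x r - 2 * M r" for r
    by (simp add: pitman_def M_def)
  ultimately show "p * (t - s) \<le> pitman x t - pitman x s \<and> pitman x t - pitman x s \<le> q * (t - s)"
    using M_anti xts by auto
qed

lemma slopes_in_pitman_step:
  "slopes_in D p (1 - p) x \<Longrightarrow> slopes_in D p (1 - p) (pitman_step k x)"
  by (simp add: pitman_step_def slopes_in_flip_iff slopes_in_pitman)

lemma slopes_in_pitman_iter:
  "slopes_in D p (1 - p) x \<Longrightarrow> slopes_in D p (1 - p) (pitman_iter k j x)"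
  by (induction j arbitrary: k x) (simp_all add: slopes_in_pitman_step)

lemma in_cone_on_pitman_step:
  assumes "in_cone_on \<tau> x"
  shows "in_cone_on \<tau> (pitman_step k x)"
  unfolding in_cone_on_iff
proof (intro allI impI)
  fix t assume t: "0 \<le> t" "t \<le> \<tau>"
  have x: "0 \<le> x s \<and> x s \<le> s" if "0 \<le> s" "s \<le> t" for s
    using assms that t unfolding in_cone_on_iff by auto
  then have "x 0 = 0" using t by force
  have "pitman x t = x t"
    by (rule pitman_eq_self) (use x t \<open>x 0 = 0\<close> in auto)
  moreover have "pitman (flip x) t = flip x t"
    by (rule pitman_eq_self) (use x t \<open>x 0 = 0\<close> in \<open>auto simp: flip_def\<close>)
  ultimately show "0 \<le> pitman_step k x t \<and> pitman_step k x t \<le> t"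
    using x t by (auto simp: pitman_step_def flip_def)
qed

section \<open>Leaving the corner at the origin\<close>

lemma slopes_in_flip: "slopes_in D p q x \<Longrightarrow> slopes_in D (1 - q) (1 - p) (flip x)"
  by (simp add: slopes_in_flip_iff)

lemma in_cone_on_pitman_iter_flip_iff:
  "in_cone_on \<tau> (pitman_iter (Suc k) j (flip x)) \<longleftrightarrow> in_cone_on \<tau> (pitman_iter k j x)"
  by (simp only: flip_pitman_iter[symmetric] in_cone_on_flip)

lemma in_cone_on_of_slopes_in:
  assumes "slopes_in D p q x" "x 0 = 0" "0 \<le> p" "q \<le> 1"
  shows "in_cone_on D x"
  unfolding in_cone_on_iff
proof (intro allI impI)
  fix t assume t: "0 \<le> t" "t \<le> D"
  then have "p * t \<le> x t" "x t \<le> q * t"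
    using slopes_inD[OF assms(1), of 0 t] assms(2) by auto
  moreover have "0 \<le> p * t"
    using assms(3) t by simp
  moreover have "q * t \<le> 1 * t"
    by (rule mult_right_mono) (use assms(4) t in auto)
  ultimately show "0 \<le> x t \<and> x t \<le> t" by linarith
qed

lemma slopes_in_pitman_of_nonpos:
  assumes "slopes_in D p q x" "q \<le> 0"
  shows "slopes_in D (- q) (- p) (pitman x)"
proof -
  have "pitman x t = - x t" if "0 \<le> t" "t \<le> D" for t
  proof (rule pitman_eq_uminus[OF that(1)])
    fix s assume "0 \<le> s" "s \<le> t"
    then have "x t - x s \<le> q * (t - s)" "q * (t - s) \<le> 0"
      using slopes_inD[OF assms(1), of s t] that assms(2) by (auto simp: mult_nonpos_nonneg)
    then show "x t \<le> x s" by linarith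
  qed
  moreover have "slopes_in D (- q) (- p) (\<lambda>t. - x t)"
    unfolding slopes_in_def
  proof (intro allI impI)
    fix s t :: real assume "0 \<le> s" "s \<le> t" "t \<le> D"
    then show "- q * (t - s) \<le> - x t - - x s \<and> - x t - - x s \<le> - p * (t - s)"
      using slopes_inD[OF assms(1), of s t] by linarith
  qed
  ultimately show ?thesis by (rule slopes_in_cong[rotated]) auto
qed

lemma in_cone_on_pitman:
  assumes sl: "slopes_in D p q x" and x0: "x 0 = 0" and "p \<le> 0" "q - 2 * p \<le> 1"
  shows "in_cone_on D (pitman x)"
  unfolding in_cone_on_iff
proof (intro allI impI conjI)
  fix t assume t: "0 \<le> t" "t \<le> D"
  show "0 \<le> pitman x t"
    using pitman_nonneg[OF slopes_in_bdd_below[OF sl t] x0 t(1)] .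
  have "p * t \<le> (INF u\<in>{0..t}. x u)"
  proof (rule cINF_greatest)
    fix u assume u: "u \<in> {0..t}"
    then have "p * u \<le> x u" using slopes_inD[OF sl, of 0 u] x0 t by auto
    moreover have "p * t \<le> p * u" using u \<open>p \<le> 0\<close> by (auto intro: mult_left_mono_neg)
    ultimately show "p * t \<le> x u" by linarith
  qed (use t in simp)
  moreover have "x t \<le> q * t" using slopes_inD[OF sl, of 0 t] x0 t by auto
  moreover have "(q - 2 * p) * t \<le> 1 * t" using t \<open>q - 2 * p \<le> 1\<close> by (intro mult_right_mono)
  moreover have "(q - 2 * p) * t = q * t - 2 * (p * t)"
    by (simp add: algebra_simps)
  ultimately show "pitman x t \<le> t" unfolding pitman_def by linarith
qed

lemma pitman_iter_in_cone_of_slope_le: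
  assumes "odd k" "a \<le> 3/4" "slopes_in D (a - 1/4) (a + 1/4) x" "x 0 = 0"
  shows "\<exists>j. in_cone_on D (pitman_iter k j x)"
proof -
  obtain n :: nat where "- a \<le> n" by (meson real_arch_simple)
  then show ?thesis using assms
  proof (induction n arbitrary: a k x rule: less_induct)
    case (less n)
    consider "a \<le> -1/4" | "-1/4 < a" "a < 1/4" | "1/4 \<le> a" by linarith
    then show ?case
    proof cases
      case 1
      \<comment> \<open>a Pitman step followed by a flip raises the slope from \<open>a\<close> to \<open>1 + a\<close>\<close>
      let ?y = "flip (pitman x)"
      have "slopes_in D (- a - 1/4) (- a + 1/4) (pitman x)"
        using slopes_in_pitman_of_nonpos[OF less.prems(4)] 1 by simp
      then have "slopes_in D ((1 + a) - 1/4) ((1 + a) + 1/4) ?y"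
        by (rule slopes_in_mono[OF slopes_in_flip]) simp_all
      moreover have "?y 0 = 0" "- (1 + a) \<le> real (n - 1)" "n - 1 < n"
        using less.prems 1 by (auto simp: pitman_def flip_def)
      ultimately obtain j where "in_cone_on D (pitman_iter (Suc (Suc k)) j ?y)"
        using less.IH[of "n - 1" "1 + a" "Suc (Suc k)" ?y] less.prems 1 by auto
      then have "in_cone_on D (pitman_iter (Suc k) j (pitman x))"
        by (simp only: in_cone_on_pitman_iter_flip_iff)
      then have "in_cone_on D (pitman_iter k (Suc j) x)"
        using less.prems(2) by (simp add: pitman_step_def)
      then show ?thesis ..
    next
      case 2
      then have "in_cone_on D (pitman_iter k 1 x)"
        using in_cone_on_pitman[OF less.prems(4,5)] less.prems by (simp add: pitman_step_def)
      then show ?thesis ..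
    next
      case 3
      then have "in_cone_on D (pitman_iter k 0 x)"
        using in_cone_on_of_slopes_in[OF less.prems(4,5)] less.prems by simp
      then show ?thesis ..
    qed
  qed
qed

lemma pitman_iter_in_cone_near_zero:
  assumes "slopes_in D (a - 1/4) (a + 1/4) x" "x 0 = 0"
  shows "\<exists>j. in_cone_on D (pitman_iter k j x)"
proof -
  have odd_case: "\<exists>j. in_cone_on D (pitman_iter k j x)"
    if "odd k" "slopes_in D (a - 1/4) (a + 1/4) x" "x 0 = 0" for k a x
  proof (cases "a \<le> 3/4")
    case True
    show ?thesis by (rule pitman_iter_in_cone_of_slope_le[OF that(1) True that(2,3)])
  next
    case False
    \<comment> \<open>the Pitman step keeps the slope \<open>a\<close>; the flip then lowers it to \<open>1 - a < 1/4\<close>\<close>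
    have "0 \<le> (a - 1/4) + (a + 1/4)"
      using False by linarith
    then have "slopes_in D (a - 1/4) (a + 1/4) (pitman x)"
      by (rule slopes_in_pitman[OF that(2)])
    then have "slopes_in D ((1 - a) - 1/4) ((1 - a) + 1/4) (flip (pitman x))"
      by (rule slopes_in_mono[OF slopes_in_flip]) simp_all
    moreover have "flip (pitman x) 0 = 0"
      using that by (simp add: pitman_def flip_def)
    moreover have "odd (Suc (Suc k))" "1 - a \<le> 3/4"
      using that(1) False by simp_all
    ultimately obtain j where "in_cone_on D (pitman_iter (Suc (Suc k)) j (flip (pitman x)))"
      using pitman_iter_in_cone_of_slope_le by blast
    then have "in_cone_on D (pitman_iter (Suc k) j (pitman x))"
      by (simp only: in_cone_on_pitman_iter_flip_iff)
    then have "in_cone_on D (pitman_iter k (Suc j) x)"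
      using that(1) by (simp add: pitman_step_def)
    then show ?thesis ..
  qed
  show ?thesis
  proof (cases "odd k")
    case False
    then have "odd (Suc k)" by simp
    moreover have "slopes_in D ((1 - a) - 1/4) ((1 - a) + 1/4) (flip x)"
      by (rule slopes_in_mono[OF slopes_in_flip[OF assms(1)]]) simp_all
    moreover have "flip x 0 = 0"
      using assms(2) by (simp add: flip_def)
    ultimately obtain j where "in_cone_on D (pitman_iter (Suc k) j (flip x))"
      using odd_case by blast
    then have "in_cone_on D (pitman_iter k j x)"
      by (simp only: in_cone_on_pitman_iter_flip_iff)
    then show ?thesis ..
  qed (rule odd_case[OF _ assms])
qed

lemma in_cone_on_pitman_extends:
  assumes A: "0 < A" and sl: "slopes_in T (- A) (1 + A) y"
    and below: "\<And>t. 0 \<le> t \<Longrightarrow> t \<le> T \<Longrightarrow> y t \<le> t"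
    and cone: "in_cone_on \<tau> y" and \<tau>: "0 \<le> \<tau>" "\<tau> \<le> T"
  shows "in_cone_on (min T ((1 + 1 / (3 * A)) * \<tau>)) (pitman y)"
  unfolding in_cone_on_iff
proof (intro allI impI conjI)
  fix t assume t: "0 \<le> t" "t \<le> min T ((1 + 1 / (3 * A)) * \<tau>)"
  define M where "M = (INF u\<in>{0..t}. y u)"
  have bdd: "bdd_below (y ` {0..t})"
    using slopes_in_bdd_below[OF sl] t by auto
  have cone_y: "0 \<le> y u" if "0 \<le> u" "u \<le> \<tau>" for u
    using cone that unfolding in_cone_on_iff by auto
  have y0: "y 0 = 0"
    using cone \<tau> unfolding in_cone_on_iff by force
  show "0 \<le> pitman y t"
    by (rule pitman_nonneg[OF bdd y0 t(1)])
  have "y t \<le> t" using below t by auto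
  show "pitman y t \<le> t"
  proof (cases "t \<le> \<tau>")
    case True
    then have "0 \<le> M"
      unfolding M_def using t by (intro cINF_greatest cone_y) auto
    then show ?thesis using \<open>y t \<le> t\<close> unfolding pitman_def M_def by linarith
  next
    case False
    \<comment> \<open>beyond \<open>\<tau>\<close> the path can sink by at most \<open>A h\<close> in time \<open>h = t - \<tau> \<le> \<tau> / (3 A)\<close>\<close>
    define h where "h = t - \<tau>"
    have "h * (3 * A) \<le> \<tau>"
      using t A by (simp add: h_def field_simps)
    then have h: "3 * (A * h) \<le> \<tau>" by (simp add: algebra_simps)
    have "min 0 (y \<tau> - A * h) \<le> M"
      unfolding M_def
    proof (rule cINF_greatest)
      fix u assume u: "u \<in> {0..t}"
      show "min 0 (y \<tau> - A * h) \<le> y u"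
      proof (cases "u \<le> \<tau>")
        case True
        then show ?thesis using cone_y u by (simp add: min_le_iff_disj)
      next
        case False
        then have "- A * (u - \<tau>) \<le> y u - y \<tau>"
          using slopes_inD[OF sl, of \<tau> u] u t \<tau> by auto
        moreover have "A * (u - \<tau>) \<le> A * h"
          using A u unfolding h_def by (intro mult_left_mono) auto
        ultimately show ?thesis by (simp add: min_le_iff_disj)
      qed
    qed (use t in simp)
    moreover have "y t - y \<tau> \<le> (1 + A) * h"
      using slopes_inD[OF sl, of \<tau> t] \<tau> t False unfolding h_def by auto
    moreover have "(1 + A) * h = h + A * h"
      by (simp add: algebra_simps)
    ultimately show ?thesis
      using \<open>y t \<le> t\<close> h cone_y[of \<tau>] \<tau> unfolding pitman_def M_def h_def by (auto simp: min_def split: if_splits)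
  qed
qed

section \<open>Growth of the interval inside the cone\<close>

lemma pitman_step_nonneg:
  assumes "odd k" "slopes_in D p q x" "x 0 = 0" "0 \<le> t" "t \<le> D"
  shows "0 \<le> pitman_step k x t"
  using pitman_nonneg[OF slopes_in_bdd_below[OF assms(2,4,5)] assms(3,4)] assms(1)
  by (simp add: pitman_step_def)

lemma pitman_step_le_diagonal:
  assumes "even k" "slopes_in D p q x" "x 0 = 0" "0 \<le> t" "t \<le> D"
  shows "pitman_step k x t \<le> t"
proof -
  have "slopes_in D (1 - q) (1 - p) (flip x)" "flip x 0 = 0"
    using assms(2,3) by (simp_all add: slopes_in_flip flip_def)
  then have "0 \<le> pitman (flip x) t"
    using pitman_nonneg[OF slopes_in_bdd_below] assms(4,5) by blast
  then show ?thesis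
    using assms(1) by (simp add: pitman_step_def flip_def)
qed

lemma in_cone_on_pitman_iter_extends:
  assumes A: "0 < A" and sl: "slopes_in T (- A) (1 + A) x" and x0: "x 0 = 0"
    and cone: "in_cone_on \<tau> (pitman_iter 0 (Suc j) x)" and \<tau>: "0 \<le> \<tau>" "\<tau> \<le> T"
  shows "in_cone_on (min T ((1 + 1 / (3 * A)) * \<tau>)) (pitman_iter 0 (Suc (Suc j)) x)"
proof -
  define y where "y = pitman_iter 0 j x"
  define z where "z = pitman_step j y"
  have sl_y: "slopes_in T (- A) (1 + A) y" and sl_z: "slopes_in T (- A) (1 + A) z"
    using slopes_in_pitman_iter[of T "- A" x] slopes_in_pitman_step[of T "- A"] sl
    unfolding y_def z_def by simp_all
  have y0: "y 0 = 0"
    unfolding y_def by (rule pitman_iter_zero[of x, OF x0])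
  have z_eq: "pitman_iter 0 (Suc j) x = z" and step: "pitman_iter 0 (Suc (Suc j)) x = pitman_step (Suc j) z"
    unfolding y_def z_def by (simp_all only: pitman_iter_Suc_right add_0)
  show ?thesis
  proof (cases "even j")
    case True
    \<comment> \<open>a step of even index ends below the diagonal, as the following odd step requires\<close>
    have "z t \<le> t" if "0 \<le> t" "t \<le> T" for t
      unfolding z_def by (rule pitman_step_le_diagonal[OF True sl_y y0 that])
    then have "in_cone_on (min T ((1 + 1 / (3 * A)) * \<tau>)) (pitman z)"
      using in_cone_on_pitman_extends[OF A sl_z] cone \<tau> z_eq by auto
    then show ?thesis using True step by (simp add: pitman_step_def)
  next
    case False
    have "flip z t \<le> t" if "0 \<le> t" "t \<le> T" for t
      using pitman_step_nonneg[OF _ sl_y y0 that] False unfolding z_def flip_def by simp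
    moreover have "slopes_in T (- A) (1 + A) (flip z)"
      using slopes_in_flip[OF sl_z] by simp
    ultimately have "in_cone_on (min T ((1 + 1 / (3 * A)) * \<tau>)) (pitman (flip z))"
      using in_cone_on_pitman_extends[OF A] cone \<tau> z_eq by auto
    then show ?thesis using False step by (simp add: pitman_step_def)
  qed
qed

lemma pitman_iter_in_cone_everywhere:
  assumes A: "0 < A" and sl: "slopes_in T (- A) (1 + A) x" and x0: "x 0 = 0" and T: "0 \<le> T"
    and cone: "in_cone_on \<tau> (pitman_iter 0 (Suc j) x)" and \<tau>: "0 < \<tau>"
  shows "\<exists>j. in_cone_on T (pitman_iter 0 (Suc j) x)"
proof -
  define c where "c = 1 + 1 / (3 * A)"
  have c: "1 < c" using A by (simp add: c_def)
  have "\<exists>j. in_cone_on (min T (c ^ m * \<tau>)) (pitman_iter 0 (Suc j) x)" for m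
  proof (induction m)
    case 0
    then show ?case using in_cone_on_mono[OF cone, of "min T \<tau>"] by auto
  next
    case (Suc m)
    then obtain j where "in_cone_on (min T (c ^ m * \<tau>)) (pitman_iter 0 (Suc j) x)" ..
    then have "in_cone_on (min T (c * min T (c ^ m * \<tau>))) (pitman_iter 0 (Suc (Suc j)) x)"
      using in_cone_on_pitman_iter_extends[OF A sl x0] T \<tau> c unfolding c_def by simp
    moreover have "1 * T \<le> c * T"
      using T c by (intro mult_right_mono) auto
    then have "min T (c ^ Suc m * \<tau>) \<le> min T (c * min T (c ^ m * \<tau>))"
      by (auto simp: min_def mult.assoc)
    ultimately show ?case using in_cone_on_mono by blast
  qed
  moreover obtain m where "T / \<tau> < c ^ m"
    using real_arch_pow[OF c] by blast
  then have "min T (c ^ m * \<tau>) = T"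
    using \<tau> by (simp add: pos_divide_less_eq)
  ultimately show ?thesis by metis
qed

section \<open>Piecewise \<open>C\<^sup>1\<close> paths\<close>

lemma lipschitz_on_Icc_of_derivative_bound:
  fixes f f' :: "real \<Rightarrow> real"
  assumes "\<And>x. x \<in> {a..b} \<Longrightarrow> (f has_real_derivative f' x) (at x within {a..b})"
    and "\<And>x. x \<in> {a..b} \<Longrightarrow> \<bar>f' x\<bar> \<le> B" and "0 \<le> B"
  shows "B-lipschitz_on {a..b} f"
proof (rule lipschitz_onI)
  fix x y assume "x \<in> {a..b}" "y \<in> {a..b}"
  then show "dist (f x) (f y) \<le> B * dist x y"
    using field_differentiable_bound[of "{a..b}" f f' B x y] assms by (simp add: dist_real_def)
qed fact

lemma lipschitz_on_Icc_of_C1: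
  fixes f f' :: "real \<Rightarrow> real"
  assumes "continuous_on {a..b} f'"
    and "\<And>x. x \<in> {a..b} \<Longrightarrow> (f has_real_derivative f' x) (at x within {a..b})"
  shows "\<exists>L. L-lipschitz_on {a..b} f"
proof -
  obtain B where "\<forall>y\<in>f' ` {a..b}. norm y \<le> B"
    using compact_imp_bounded[OF compact_continuous_image[OF assms(1) compact_Icc]]
    by (auto simp: bounded_iff)
  then have "\<And>x. x \<in> {a..b} \<Longrightarrow> \<bar>f' x\<bar> \<le> max B 0" by force
  then show ?thesis
    using lipschitz_on_Icc_of_derivative_bound[OF assms(2)] by (meson max.cobounded2)
qed

lemma lipschitz_on_piecewise_C1:
  assumes "piecewise_C1_on a b f"
  shows "\<exists>L. L-lipschitz_on {a..b} f"
proof -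
  obtain ts where ts: "length ts \<ge> 2" "hd ts = a" "last ts = b"
    and pieces: "\<And>i. Suc i < length ts \<Longrightarrow> \<exists>f'. continuous_on {ts ! i .. ts ! Suc i} f' \<and>
      (\<forall>x\<in>{ts ! i .. ts ! Suc i}. (f has_real_derivative f' x) (at x within {ts ! i .. ts ! Suc i}))"
    using assms unfolding piecewise_C1_on_def by blast
  have "ts \<noteq> []" using ts(1) by auto
  have "\<exists>L. L-lipschitz_on {a..ts ! i} f" if "i < length ts" for i
    using that
  proof (induction i)
    case 0
    then show ?case
      using ts(2) \<open>ts \<noteq> []\<close> lipschitz_on_singleton[of 0 a f] by (auto simp: hd_conv_nth)
  next
    case (Suc i)
    then obtain L where "L-lipschitz_on {a..ts ! i} f" by auto
    moreover obtain M where "M-lipschitz_on {ts ! i..ts ! Suc i} f"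
      using pieces[OF Suc.prems] lipschitz_on_Icc_of_C1 by blast
    ultimately have "(max L M)-lipschitz_on {a..ts ! Suc i} f"
      using lipschitz_on_concat_max[of L a "ts ! i" f M "ts ! Suc i" f] by simp
    then show ?case ..
  qed
  from this[of "length ts - 1"] show ?thesis
    using ts(3) \<open>ts \<noteq> []\<close> by (simp add: last_conv_nth)
qed

lemma piecewise_C1_on_locally_affine:
  assumes "piecewise_C1_on a b f" "0 < e"
  shows "\<exists>\<delta>>0. \<exists>c. e-lipschitz_on {a..a + \<delta>} (\<lambda>t. f t - c * t)"
proof -
  obtain ts where ts: "length ts \<ge> 2" "sorted_wrt (<) ts" "hd ts = a"
    and pieces: "\<And>i. Suc i < length ts \<Longrightarrow> \<exists>f'. continuous_on {ts ! i .. ts ! Suc i} f' \<and>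
      (\<forall>x\<in>{ts ! i .. ts ! Suc i}. (f has_real_derivative f' x) (at x within {ts ! i .. ts ! Suc i}))"
    using assms unfolding piecewise_C1_on_def by blast
  define b' where "b' = ts ! 1"
  have "ts \<noteq> []" using ts(1) by auto
  then have "ts ! 0 = a" using ts(3) by (simp add: hd_conv_nth)
  moreover have "ts ! 0 < b'"
    using sorted_wrt_nth_less[OF ts(2), of 0 1] ts(1) unfolding b'_def by simp
  moreover obtain f' where f': "continuous_on {a..b'} f'"
    "\<And>x. x \<in> {a..b'} \<Longrightarrow> (f has_real_derivative f' x) (at x within {a..b'})"
    using pieces[of 0] ts(1) \<open>ts ! 0 = a\<close> unfolding b'_def by auto
  ultimately have "a < b'" by simp
  then obtain d where d: "0 < d" "\<And>x. x \<in> {a..b'} \<Longrightarrow> dist x a < d \<Longrightarrow> dist (f' x) (f' a) < e"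
    using f'(1) assms(2) unfolding continuous_on_iff by (metis atLeastAtMost_iff less_eq_real_def order_refl)
  define \<delta> where "\<delta> = min (d / 2) (b' - a)"
  have \<delta>: "0 < \<delta>" "a + \<delta> \<le> b'" "\<delta> < d"
    using d(1) \<open>a < b'\<close> by (auto simp: \<delta>_def)
  have "((\<lambda>t. f t - f' a * t) has_real_derivative f' x - f' a) (at x within {a..a + \<delta>})"
    if "x \<in> {a..a + \<delta>}" for x
  proof -
    have "(f has_real_derivative f' x) (at x within {a..a + \<delta>})"
      using f'(2)[of x] that \<delta> by (auto intro: has_field_derivative_subset)
    then show ?thesis by (auto intro!: derivative_eq_intros)
  qed
  moreover have "\<bar>f' x - f' a\<bar> \<le> e" if "x \<in> {a..a + \<delta>}" for x
    using d(2)[of x] that \<delta> by (auto simp: dist_real_def)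
  ultimately have "e-lipschitz_on {a..a + \<delta>} (\<lambda>t. f t - f' a * t)"
    using assms(2) by (intro lipschitz_on_Icc_of_derivative_bound) auto
  then show ?thesis using \<delta>(1) by blast
qed

theorem proposition5p4:
  fixes T :: real and \<pi> :: "real \<Rightarrow> real"
  assumes "T > 0"
    and "continuous_on {0..T} \<pi>"
    and "piecewise_C1_on 0 T \<pi>"
    and "\<pi> 0 = 0"
  shows "\<exists>n::nat. \<forall>t\<in>{0..T}. P_iter n (\<lambda>t. (t, \<pi> t)) t \<in> C_aff"
proof -
  obtain L where L: "L-lipschitz_on {0..T} \<pi>"
    using lipschitz_on_piecewise_C1[OF assms(3)] by blast
  define A where "A = L + 1"
  have "0 < A" using lipschitz_on_nonneg[OF L] by (simp add: A_def)
  have "slopes_in T (0 - L) (0 + L) \<pi>"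
    using lipschitz_imp_slopes_in[of L T \<pi> 0] L by simp
  then have sl: "slopes_in T (- A) (1 + A) \<pi>"
    by (rule slopes_in_mono) (simp_all add: A_def)
  obtain \<delta> c where "0 < \<delta>" "(1/4)-lipschitz_on {0..\<delta>} (\<lambda>t. \<pi> t - c * t)"
    using piecewise_C1_on_locally_affine[OF assms(3), of "1/4"] by auto
  then have "slopes_in \<delta> (c - 1/4) (c + 1/4) \<pi>"
    by (intro lipschitz_imp_slopes_in)
  from pitman_iter_in_cone_near_zero[OF this assms(4)]
  obtain j where "in_cone_on \<delta> (pitman_iter 0 j \<pi>)" ..
  then have "in_cone_on \<delta> (pitman_iter 0 (Suc j) \<pi>)"
    by (simp add: pitman_iter_Suc_right in_cone_on_pitman_step del: pitman_iter.simps(2))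
  then obtain n where "in_cone_on T (pitman_iter 0 (Suc n) \<pi>)"
    using pitman_iter_in_cone_everywhere[OF \<open>0 < A\<close> sl assms(4)] assms(1) \<open>0 < \<delta>\<close> by fastforce
  then show ?thesis
    by (auto simp: P_iter_graph in_cone_on_def)
qed

end
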